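(* Let $X$ and $Y$ be sup-lattices. Then $(X,Y)$ is a Morita pair between some m-regular quantales (i.e. there exist m-regular quantales $A$, $B$ and pairings making $(A,B,X,Y,(-,-),[-,-])$ a Morita context) if and only if there exist surjective sup-preserving maps $p: X\otimes Y\otimes X\to X$ and $q: Y\otimes X\otimes Y\to Y$ such that, for all $x_1,x_2,x_3\in X$ and $y_1,y_2,y_3\in Y$: 1. $p(p(x_1\otimes y_1\otimes x_2)\otimes y_2\otimes x_3)=p(x_1\otimes q(y_1\otimes x_2\otimes y_2)\otimes x_3)=p(x_1\otimes y_1\otimes p(x_2\otimes y_2\otimes x_3))$; 2. $q(q(y_1\otimes x_1\otimes y_2)\otimes x_2\otimes y_3)=q(y_1\otimes p(x_1\otimes y_2\otimes x_2)\otimes y_3)=q(y_1\otimes x_1\otimes q(y_2\otimes x_2\otimes y_3))$; 3. if $p(u\otimes v\otimes x_1)=p(u\otimes v\otimes x_2)$ for all $u\in X$, $v\in Y$, then $x_1=x_2$; 4. if $p(x_1\otimes v\otimes u)=p(x_2\otimes v\otimes u)$ for all $u\in X$, $v\in Y$, then $x_1=x_2$; 5. if $q(v\otimes u\otimes y_1)=q(v\otimes u\otimes y_2)$ for all $v\in Y$, $u\in X$, then $y_1=y_2$; 6. if $q(y_1\otimes u\otimes v)=q(y_2\otimes u\otimes v)$ for all $u\in X$, $v\in Y$, then $y_1=y_2$.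
   Context: A sup-lattice is a complete lattice; sup-preserving maps preserve arbitrary joins. $\otimes$ denotes the tensor product in the category of sup-lattices (the universal sup-lattice for maps preserving arbitrary joins in each variable separately; it is join-generated by the elementary tensors). A quantale is a sup-lattice $A$ with an associative multiplication distributing over arbitrary joins on both sides. A right $A$-module is a sup-lattice $M$ with an action $M\times A\to M$ satisfying $m\cdot(a\cdot b)=(m\cdot a)\cdot b$ and preserving arbitrary joins in each variable; left modules are defined dually. A right $A$-module $M$ is essential if every element of $M$ is a join of elements $m\cdot a$, separated if ($m\cdot a=n\cdot a$ for all $a\in A$) implies $m=n$, and m-regular if it is both essential and separated; dually for left modules. An (m-regular) $A,B$-bimodule is a sup-lattice that is an (m-regular) left $A$-module and an (m-regular) right $B$-module with commuting actions. A quantale $A$ is m-regular if it is m-regular as an $A,A$-bimodule over itself. A Morita context between m-regular quantales $A$ and $B$ is a 6-tuple $(A,B,X,Y,(-,-),[-,-])$ where $X$ is an m-regular $A,B$-bimodule, $Y$ is an m-regular $B,A$-bimodule, and $(-,-):X\times Y\to A$, $[-,-]:Y\times X\to B$ are bimodule maps (preserving joins in each variable and compatible with the outer actions) satisfying $(x\cdot b,y)=(x,b\cdot y)$, $[y\cdot a,x]=[y,a\cdot x]$, $(x_1,y)\cdot x_2=x_1\cdot[y,x_2]$, $[y_1,x]\cdot y_2=y_1\cdot(x,y_2)$ for all $x,x_i\in X$, $y,y_i\in Y$, $a\in A$, $b\in B$, and such that the induced sup-preserving maps $X\otimes Y\to A$ and $Y\otimes X\to B$ are surjective. The pair $(X,Y)$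 is then called a Morita pair. *)

theory Defs
  imports Main
begin

record 'a slat =
  carrier :: "'a set"
  le :: "'a \<Rightarrow> 'a \<Rightarrow> bool"

definition is_lub :: "('a, 'e) slat_scheme \<Rightarrow> 'a set \<Rightarrow> 'a \<Rightarrow> bool" where
  "is_lub L S s \<longleftrightarrow> s \<in> carrier L \<and> (\<forall>x\<in>S. le L x s) \<and>
     (\<forall>z\<in>carrier L. (\<forall>x\<in>S. le L x z) \<longrightarrow> le L s z)"

definition lub :: "('a, 'e) slat_scheme \<Rightarrow> 'a set \<Rightarrow> 'a" where
  "lub L S = (THE s. is_lub L S s)"

definition sup_lattice :: "('a, 'e) slat_scheme \<Rightarrow> bool" where
  "sup_lattice L \<longleftrightarrow>
     (\<forall>x\<in>carrier L. le L x x) \<and>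
     (\<forall>x\<in>carrier L. \<forall>y\<in>carrier L. le L x y \<longrightarrow> le L y x \<longrightarrow> x = y) \<and>
     (\<forall>x\<in>carrier L. \<forall>y\<in>carrier L. \<forall>z\<in>carrier L. le L x y \<longrightarrow> le L y z \<longrightarrow> le L x z) \<and>
     (\<forall>S. S \<subseteq> carrier L \<longrightarrow> (\<exists>s. is_lub L S s))"

definition sup_preserving ::
  "('a, 'e) slat_scheme \<Rightarrow> ('b, 'f) slat_scheme \<Rightarrow> ('a \<Rightarrow> 'b) \<Rightarrow> bool" where
  "sup_preserving L M f \<longleftrightarrow>
     (\<forall>x\<in>carrier L. f x \<in> carrier M) \<and>
     (\<forall>S. S \<subseteq> carrier L \<longrightarrow> f (lub L S) = lub M (f ` S))"

definition tlat :: "'a::complete_lattice slat" where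
  "tlat = \<lparr>carrier = UNIV, le = (\<le>)\<rparr>"

text \<open>Binary tensor product X \<otimes> Y: the down-closed subsets of X \<times> Y that are closed
  under arbitrary joins in each variable separately, ordered by inclusion.\<close>
definition bi_ideal :: "('a::complete_lattice \<times> 'b::complete_lattice) set \<Rightarrow> bool" where
  "bi_ideal D \<longleftrightarrow>
     (\<forall>a b a' b'. (a, b) \<in> D \<longrightarrow> a' \<le> a \<longrightarrow> b' \<le> b \<longrightarrow> (a', b') \<in> D) \<and>
     (\<forall>S b. (\<forall>a\<in>S. (a, b) \<in> D) \<longrightarrow> (Sup S, b) \<in> D) \<and>
     (\<forall>a T. (\<forall>b\<in>T. (a, b) \<in> D) \<longrightarrow> (a, Sup T) \<in> D)"

definition tensor2 :: "('a::complete_lattice \<times> 'b::complete_lattice) set slat" where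
  "tensor2 = \<lparr>carrier = {D. bi_ideal D}, le = (\<subseteq>)\<rparr>"

definition etensor2 :: "'a::complete_lattice \<Rightarrow> 'b::complete_lattice \<Rightarrow> ('a \<times> 'b) set" where
  "etensor2 x y = {(a, b). (a \<le> x \<and> b \<le> y) \<or> a = bot \<or> b = bot}"

definition tri_ideal ::
  "('a::complete_lattice \<times> 'b::complete_lattice \<times> 'c::complete_lattice) set \<Rightarrow> bool" where
  "tri_ideal D \<longleftrightarrow>
     (\<forall>a b c a' b' c'. (a, b, c) \<in> D \<longrightarrow> a' \<le> a \<longrightarrow> b' \<le> b \<longrightarrow> c' \<le> c \<longrightarrow> (a', b', c') \<in> D) \<and>
     (\<forall>S b c. (\<forall>a\<in>S. (a, b, c) \<in> D) \<longrightarrow> (Sup S, b, c) \<in> D) \<and>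
     (\<forall>a T c. (\<forall>b\<in>T. (a, b, c) \<in> D) \<longrightarrow> (a, Sup T, c) \<in> D) \<and>
     (\<forall>a b U. (\<forall>c\<in>U. (a, b, c) \<in> D) \<longrightarrow> (a, b, Sup U) \<in> D)"

definition tensor3 ::
  "('a::complete_lattice \<times> 'b::complete_lattice \<times> 'c::complete_lattice) set slat" where
  "tensor3 = \<lparr>carrier = {D. tri_ideal D}, le = (\<subseteq>)\<rparr>"

definition etensor3 ::
  "'a::complete_lattice \<Rightarrow> 'b::complete_lattice \<Rightarrow> 'c::complete_lattice \<Rightarrow> ('a \<times> 'b \<times> 'c) set" where
  "etensor3 x y z = {(a, b, c). (a \<le> x \<and> b \<le> y \<and> c \<le> z) \<or> a = bot \<or> b = bot \<or> c = bot}"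

record 'a quantale = "'a slat" +
  mult :: "'a \<Rightarrow> 'a \<Rightarrow> 'a"

definition quantale :: "'a quantale \<Rightarrow> bool" where
  "quantale A \<longleftrightarrow> sup_lattice A \<and>
     (\<forall>a\<in>carrier A. \<forall>b\<in>carrier A. mult A a b \<in> carrier A) \<and>
     (\<forall>a\<in>carrier A. \<forall>b\<in>carrier A. \<forall>c\<in>carrier A.
        mult A (mult A a b) c = mult A a (mult A b c)) \<and>
     (\<forall>a\<in>carrier A. \<forall>S. S \<subseteq> carrier A \<longrightarrow>
        mult A a (lub A S) = lub A (mult A a ` S)) \<and>
     (\<forall>a\<in>carrier A. \<forall>S. S \<subseteq> carrier A \<longrightarrow>
        mult A (lub A S) a = lub A ((\<lambda>s. mult A s a) ` S))"

definition right_module ::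
  "'a quantale \<Rightarrow> ('m, 'e) slat_scheme \<Rightarrow> ('m \<Rightarrow> 'a \<Rightarrow> 'm) \<Rightarrow> bool" where
  "right_module A M act \<longleftrightarrow> quantale A \<and> sup_lattice M \<and>
     (\<forall>m\<in>carrier M. \<forall>a\<in>carrier A. act m a \<in> carrier M) \<and>
     (\<forall>m\<in>carrier M. \<forall>a\<in>carrier A. \<forall>b\<in>carrier A. act m (mult A a b) = act (act m a) b) \<and>
     (\<forall>a\<in>carrier A. \<forall>S. S \<subseteq> carrier M \<longrightarrow> act (lub M S) a = lub M ((\<lambda>m. act m a) ` S)) \<and>
     (\<forall>m\<in>carrier M. \<forall>S. S \<subseteq> carrier A \<longrightarrow> act m (lub A S) = lub M (act m ` S))"

definition left_module ::
  "'a quantale \<Rightarrow> ('m, 'e) slat_scheme \<Rightarrow> ('a \<Rightarrow> 'm \<Rightarrow> 'm) \<Rightarrow> bool" where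
  "left_module A M act \<longleftrightarrow> quantale A \<and> sup_lattice M \<and>
     (\<forall>m\<in>carrier M. \<forall>a\<in>carrier A. act a m \<in> carrier M) \<and>
     (\<forall>m\<in>carrier M. \<forall>a\<in>carrier A. \<forall>b\<in>carrier A. act (mult A a b) m = act a (act b m)) \<and>
     (\<forall>a\<in>carrier A. \<forall>S. S \<subseteq> carrier M \<longrightarrow> act a (lub M S) = lub M (act a ` S)) \<and>
     (\<forall>m\<in>carrier M. \<forall>S. S \<subseteq> carrier A \<longrightarrow> act (lub A S) m = lub M ((\<lambda>a. act a m) ` S))"

definition right_mregular ::
  "'a quantale \<Rightarrow> ('m, 'e) slat_scheme \<Rightarrow> ('m \<Rightarrow> 'a \<Rightarrow> 'm) \<Rightarrow> bool" where
  "right_mregular A M act \<longleftrightarrow> right_module A M act \<and>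
     \<comment> \<open>essential\<close>
     (\<forall>m\<in>carrier M. \<exists>S. S \<subseteq> {act n a | n a. n \<in> carrier M \<and> a \<in> carrier A} \<and> m = lub M S) \<and>
     \<comment> \<open>separated\<close>
     (\<forall>m\<in>carrier M. \<forall>n\<in>carrier M. (\<forall>a\<in>carrier A. act m a = act n a) \<longrightarrow> m = n)"

definition left_mregular ::
  "'a quantale \<Rightarrow> ('m, 'e) slat_scheme \<Rightarrow> ('a \<Rightarrow> 'm \<Rightarrow> 'm) \<Rightarrow> bool" where
  "left_mregular A M act \<longleftrightarrow> left_module A M act \<and>
     (\<forall>m\<in>carrier M. \<exists>S. S \<subseteq> {act a n | a n. a \<in> carrier A \<and> n \<in> carrier M} \<and> m = lub M S) \<and>
     (\<forall>m\<in>carrier M. \<forall>n\<in>carrier M. (\<forall>a\<in>carrier A. act a m = act a n) \<longrightarrow> m = n)"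

definition mregular_bimodule ::
  "'a quantale \<Rightarrow> 'b quantale \<Rightarrow> ('m, 'e) slat_scheme \<Rightarrow>
   ('a \<Rightarrow> 'm \<Rightarrow> 'm) \<Rightarrow> ('m \<Rightarrow> 'b \<Rightarrow> 'm) \<Rightarrow> bool" where
  "mregular_bimodule A B M l r \<longleftrightarrow> left_mregular A M l \<and> right_mregular B M r \<and>
     (\<forall>a\<in>carrier A. \<forall>m\<in>carrier M. \<forall>b\<in>carrier B. r (l a m) b = l a (r m b))"

definition mregular_quantale :: "'a quantale \<Rightarrow> bool" where
  "mregular_quantale A \<longleftrightarrow> quantale A \<and> mregular_bimodule A A A (mult A) (mult A)"

text \<open>Morita context (A, B, X, Y, (-,-), [-,-]) with X an A,B-bimodule (actions lX, rX),
  Y a B,A-bimodule (actions lY, rY), pairings pr = (-,-) and br = [-,-].\<close>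
definition morita_context ::
  "'a quantale \<Rightarrow> 'b quantale \<Rightarrow>
   ('a \<Rightarrow> 'x::complete_lattice \<Rightarrow> 'x) \<Rightarrow> ('x \<Rightarrow> 'b \<Rightarrow> 'x) \<Rightarrow>
   ('b \<Rightarrow> 'y::complete_lattice \<Rightarrow> 'y) \<Rightarrow> ('y \<Rightarrow> 'a \<Rightarrow> 'y) \<Rightarrow>
   ('x \<Rightarrow> 'y \<Rightarrow> 'a) \<Rightarrow> ('y \<Rightarrow> 'x \<Rightarrow> 'b) \<Rightarrow> bool" where
  "morita_context A B lX rX lY rY pr br \<longleftrightarrow>
     mregular_quantale A \<and> mregular_quantale B \<and>
     mregular_bimodule A B (tlat :: 'x slat) lX rX \<and>
     mregular_bimodule B A (tlat :: 'y slat) lY rY \<and>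
     \<comment> \<open>the pairings take values in the quantales\<close>
     (\<forall>x y. pr x y \<in> carrier A) \<and> (\<forall>y x. br y x \<in> carrier B) \<and>
     \<comment> \<open>join preservation in each variable\<close>
     (\<forall>S y. pr (Sup S) y = lub A ((\<lambda>x. pr x y) ` S)) \<and>
     (\<forall>x T. pr x (Sup T) = lub A (pr x ` T)) \<and>
     (\<forall>T x. br (Sup T) x = lub B ((\<lambda>y. br y x) ` T)) \<and>
     (\<forall>y S. br y (Sup S) = lub B (br y ` S)) \<and>
     \<comment> \<open>compatibility with the outer actions\<close>
     (\<forall>a\<in>carrier A. \<forall>x y. pr (lX a x) y = mult A a (pr x y)) \<and>
     (\<forall>a\<in>carrier A. \<forall>x y. pr x (rY y a) = mult A (pr x y) a) \<and>
     (\<forall>b\<in>carrier B. \<forall>y x. br (lY b y) x = mult B b (br y x)) \<and>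
     (\<forall>b\<in>carrier B. \<forall>y x. br y (rX x b) = mult B (br y x) b) \<and>
     \<comment> \<open>balancing and associativity conditions\<close>
     (\<forall>x y. \<forall>b\<in>carrier B. pr (rX x b) y = pr x (lY b y)) \<and>
     (\<forall>y x. \<forall>a\<in>carrier A. br (rY y a) x = br y (lX a x)) \<and>
     (\<forall>x1 y x2. lX (pr x1 y) x2 = rX x1 (br y x2)) \<and>
     (\<forall>y1 x y2. lY (br y1 x) y2 = rY y1 (pr x y2)) \<and>
     \<comment> \<open>the induced maps X \<otimes> Y \<rightarrow> A and Y \<otimes> X \<rightarrow> B exist and are surjective\<close>
     (\<exists>f. sup_preserving (tensor2 :: ('x \<times> 'y) set slat) A f \<and>
          (\<forall>x y. f (etensor2 x y) = pr x y) \<and> f ` carrier (tensor2 :: ('x \<times> 'y) set slat) = carrier A) \<and>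
     (\<exists>g. sup_preserving (tensor2 :: ('y \<times> 'x) set slat) B g \<and>
          (\<forall>y x. g (etensor2 y x) = br y x) \<and> g ` carrier (tensor2 :: ('y \<times> 'x) set slat) = carrier B)"

end

(*
  Given a Morita context, p (x \<otimes> y \<otimes> x') = (x, y) \<cdot> x' and q (y \<otimes> x \<otimes> y') = [y, x] \<cdot> y' come
  from trilinear maps, and the compatibility axioms of the context are exactly the associativity
  laws 1 and 2.  Since A is join-generated by the pairings (x, y) and X is an essential, separated
  A,B-bimodule, p is surjective and separates points in its outer arguments; likewise for q.

  Conversely, A is recovered from p as a quotient of X \<otimes> Y: a formal join of pairs (x, y) acts
  on X by z \<mapsto> \<Squnion> p (x \<otimes> y \<otimes> z), two formal joins are identified when they act alike, and
  (x, y) (x', y') = (p (x \<otimes> y \<otimes> x'), y') is a well-defined associative product by law 1.  B is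
  built from q in the same way, and conditions 3 to 6 make both quantales and all four module
  structures m-regular.
*)

theory Submission
  imports Defs
begin

lemma lub_eqI:
  assumes "is_lub L S s"
    and "\<And>x y. x \<in> carrier L \<Longrightarrow> y \<in> carrier L \<Longrightarrow> le L x y \<Longrightarrow> le L y x \<Longrightarrow> x = y"
  shows "lub L S = s"
  unfolding lub_def
proof (rule the_equality)
  show "is_lub L S s" by fact
  fix s' assume "is_lub L S s'"
  then show "s' = s" using assms unfolding is_lub_def by blast
qed

lemma carrier_tlat [simp]: "carrier tlat = UNIV"
  and le_tlat [simp]: "le tlat = (\<le>)"
  by (simp_all add: tlat_def)

lemma lub_tlat [simp]: "lub tlat S = Sup S"
  by (rule lub_eqI) (auto simp: is_lub_def intro: Sup_upper Sup_least antisym)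

lemma sup_lattice_tlat: "sup_lattice tlat"
  unfolding sup_lattice_def
  by (auto simp: is_lub_def intro!: exI[of _ "Sup _"] Sup_upper Sup_least)

lemma Sup_le_or_bot:
  fixes x :: "'a::complete_lattice"
  assumes "\<forall>a\<in>S. a \<le> x \<and> Q \<or> a = bot \<or> R"
  shows "Sup S \<le> x \<and> Q \<or> Sup S = bot \<or> R"
proof (cases "R \<or> (\<forall>a\<in>S. a = bot)")
  case False
  then have Q and "\<forall>a\<in>S. a \<le> x \<or> a = bot" using assms by auto
  moreover from this(2) have "Sup S \<le> x" by (intro Sup_least) auto
  ultimately show ?thesis by blast
qed (auto simp: Sup_bot_conv)

lemma SUP_Times:
  fixes f :: "'a \<times> 'b \<Rightarrow> 'c::complete_lattice"
  shows "(SUP z\<in>A \<times> B. f z) = (SUP a\<in>A. SUP b\<in>B. f (a, b))"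
  by (rule antisym) (auto intro!: SUP_least SUP_upper2)

lemma tri_idealD:
  assumes "tri_ideal D"
  shows tri_ideal_downward: "(a, b, c) \<in> D \<Longrightarrow> a' \<le> a \<Longrightarrow> b' \<le> b \<Longrightarrow> c' \<le> c \<Longrightarrow> (a', b', c') \<in> D"
    and tri_ideal_Sup1: "(\<And>a. a \<in> S \<Longrightarrow> (a, b, c) \<in> D) \<Longrightarrow> (Sup S, b, c) \<in> D"
    and tri_ideal_Sup2: "(\<And>b. b \<in> T \<Longrightarrow> (a, b, c) \<in> D) \<Longrightarrow> (a, Sup T, c) \<in> D"
    and tri_ideal_Sup3: "(\<And>c. c \<in> U \<Longrightarrow> (a, b, c) \<in> D) \<Longrightarrow> (a, b, Sup U) \<in> D"
  using assms unfolding tri_ideal_def by metis+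

lemma tri_idealI:
  assumes "\<And>a b c a' b' c'. (a, b, c) \<in> D \<Longrightarrow> a' \<le> a \<Longrightarrow> b' \<le> b \<Longrightarrow> c' \<le> c \<Longrightarrow> (a', b', c') \<in> D"
    and "\<And>S b c. (\<And>a. a \<in> S \<Longrightarrow> (a, b, c) \<in> D) \<Longrightarrow> (Sup S, b, c) \<in> D"
    and "\<And>T a c. (\<And>b. b \<in> T \<Longrightarrow> (a, b, c) \<in> D) \<Longrightarrow> (a, Sup T, c) \<in> D"
    and "\<And>U a b. (\<And>c. c \<in> U \<Longrightarrow> (a, b, c) \<in> D) \<Longrightarrow> (a, b, Sup U) \<in> D"
  shows "tri_ideal D"
  unfolding tri_ideal_def
  by (intro conjI allI impI) (fact assms(1) | rule assms(2-4); simp)+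

lemma tri_ideal_bot:
  assumes "tri_ideal D"
  shows "(bot, b, c) \<in> D" "(a, bot, c) \<in> D" "(a, b, bot) \<in> D"
  using tri_idealD(2-4)[OF assms, of "{}"] by simp_all

lemma bi_idealD:
  assumes "bi_ideal D"
  shows bi_ideal_downward: "(a, b) \<in> D \<Longrightarrow> a' \<le> a \<Longrightarrow> b' \<le> b \<Longrightarrow> (a', b') \<in> D"
    and bi_ideal_Sup1: "(\<And>a. a \<in> S \<Longrightarrow> (a, b) \<in> D) \<Longrightarrow> (Sup S, b) \<in> D"
    and bi_ideal_Sup2: "(\<And>b. b \<in> T \<Longrightarrow> (a, b) \<in> D) \<Longrightarrow> (a, Sup T) \<in> D"
  using assms unfolding bi_ideal_def by metis+

lemma bi_idealI:
  assumes "\<And>a b a' b'. (a, b) \<in> D \<Longrightarrow> a' \<le> a \<Longrightarrow> b' \<le> b \<Longrightarrow> (a', b') \<in> D"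
    and "\<And>S b. (\<And>a. a \<in> S \<Longrightarrow> (a, b) \<in> D) \<Longrightarrow> (Sup S, b) \<in> D"
    and "\<And>T a. (\<And>b. b \<in> T \<Longrightarrow> (a, b) \<in> D) \<Longrightarrow> (a, Sup T) \<in> D"
  shows "bi_ideal D"
  unfolding bi_ideal_def
  by (intro conjI allI impI) (fact assms(1) | rule assms(2-3); simp)+

lemma bi_ideal_bot:
  assumes "bi_ideal D"
  shows "(bot, b) \<in> D" "(a, bot) \<in> D"
  using bi_idealD(2,3)[OF assms, of "{}"] by simp_all

lemma tri_ideal_Inter: "(\<And>E. E \<in> F \<Longrightarrow> tri_ideal E) \<Longrightarrow> tri_ideal (\<Inter>F)"
  by (rule tri_idealI) (blast intro: tri_idealD)+

lemma bi_ideal_Inter: "(\<And>E. E \<in> F \<Longrightarrow> bi_ideal E) \<Longrightarrow> bi_ideal (\<Inter>F)"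
  by (rule bi_idealI) (blast intro: bi_idealD)+

lemma carrier_tensor3: "carrier tensor3 = {D. tri_ideal D}"
  and carrier_tensor2: "carrier tensor2 = {D. bi_ideal D}"
  by (simp_all add: tensor3_def tensor2_def)

lemma lub_tensor3: "lub tensor3 Ds = \<Inter>{E. tri_ideal E \<and> \<Union>Ds \<subseteq> E}"
  by (rule lub_eqI) (auto simp: is_lub_def tensor3_def intro!: tri_ideal_Inter)

lemma lub_tensor2: "lub tensor2 Ds = \<Inter>{E. bi_ideal E \<and> \<Union>Ds \<subseteq> E}"
  by (rule lub_eqI) (auto simp: is_lub_def tensor2_def intro!: bi_ideal_Inter)

lemma tri_ideal_lub_tensor3: "tri_ideal (lub tensor3 Ds)"
  unfolding lub_tensor3 by (rule tri_ideal_Inter) simp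

lemma lub_tensor3_upper: "D \<in> Ds \<Longrightarrow> D \<subseteq> lub tensor3 Ds"
  unfolding lub_tensor3 by blast

lemma lub_tensor3_least: "tri_ideal E \<Longrightarrow> (\<And>D. D \<in> Ds \<Longrightarrow> D \<subseteq> E) \<Longrightarrow> lub tensor3 Ds \<subseteq> E"
  unfolding lub_tensor3 by blast

lemma lub_tensor2_upper: "D \<in> Ds \<Longrightarrow> D \<subseteq> lub tensor2 Ds"
  unfolding lub_tensor2 by blast

lemma lub_tensor2_least: "bi_ideal E \<Longrightarrow> (\<And>D. D \<in> Ds \<Longrightarrow> D \<subseteq> E) \<Longrightarrow> lub tensor2 Ds \<subseteq> E"
  unfolding lub_tensor2 by blast

lemma tri_ideal_etensor3: "tri_ideal (etensor3 x y z)"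
proof (rule tri_idealI)
  fix S b c assume "\<And>a. a \<in> S \<Longrightarrow> (a, b, c) \<in> etensor3 x y z"
  then have "\<forall>a\<in>S. a \<le> x \<and> (b \<le> y \<and> c \<le> z) \<or> a = bot \<or> (b = bot \<or> c = bot)"
    by (auto simp: etensor3_def)
  from Sup_le_or_bot[OF this] show "(Sup S, b, c) \<in> etensor3 x y z"
    by (auto simp: etensor3_def)
next
  fix T a c assume "\<And>b. b \<in> T \<Longrightarrow> (a, b, c) \<in> etensor3 x y z"
  then have "\<forall>b\<in>T. b \<le> y \<and> (a \<le> x \<and> c \<le> z) \<or> b = bot \<or> (a = bot \<or> c = bot)"
    by (auto simp: etensor3_def)
  from Sup_le_or_bot[OF this] show "(a, Sup T, c) \<in> etensor3 x y z"
    by (auto simp: etensor3_def)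
next
  fix U a b assume "\<And>c. c \<in> U \<Longrightarrow> (a, b, c) \<in> etensor3 x y z"
  then have "\<forall>c\<in>U. c \<le> z \<and> (a \<le> x \<and> b \<le> y) \<or> c = bot \<or> (a = bot \<or> b = bot)"
    by (auto simp: etensor3_def)
  from Sup_le_or_bot[OF this] show "(a, b, Sup U) \<in> etensor3 x y z"
    by (auto simp: etensor3_def)
qed (auto simp: etensor3_def bot_unique intro: order_trans)

lemma bi_ideal_etensor2: "bi_ideal (etensor2 x y)"
proof (rule bi_idealI)
  fix S b assume "\<And>a. a \<in> S \<Longrightarrow> (a, b) \<in> etensor2 x y"
  then have "\<forall>a\<in>S. a \<le> x \<and> b \<le> y \<or> a = bot \<or> b = bot"
    by (auto simp: etensor2_def)
  from Sup_le_or_bot[OF this] show "(Sup S, b) \<in> etensor2 x y"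
    by (auto simp: etensor2_def)
next
  fix T a assume "\<And>b. b \<in> T \<Longrightarrow> (a, b) \<in> etensor2 x y"
  then have "\<forall>b\<in>T. b \<le> y \<and> a \<le> x \<or> b = bot \<or> a = bot"
    by (auto simp: etensor2_def)
  from Sup_le_or_bot[OF this] show "(a, Sup T) \<in> etensor2 x y"
    by (auto simp: etensor2_def)
qed (auto simp: etensor2_def bot_unique intro: order_trans)

lemma etensor3_subset_iff: "tri_ideal E \<Longrightarrow> etensor3 x y z \<subseteq> E \<longleftrightarrow> (x, y, z) \<in> E"
  by (auto simp: etensor3_def intro: tri_ideal_downward tri_ideal_bot)

lemma etensor2_subset_iff: "bi_ideal E \<Longrightarrow> etensor2 x y \<subseteq> E \<longleftrightarrow> (x, y) \<in> E"
  by (auto simp: etensor2_def intro: bi_ideal_downward bi_ideal_bot)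

lemma etensor3_mono: "x \<le> x' \<Longrightarrow> y \<le> y' \<Longrightarrow> z \<le> z' \<Longrightarrow> etensor3 x y z \<subseteq> etensor3 x' y' z'"
  by (auto simp: etensor3_def intro: order_trans)

lemma lub_tensor3_etensor3:
  assumes "tri_ideal D"
  shows "lub tensor3 ((\<lambda>(a, b, c). etensor3 a b c) ` D) = D"
proof
  show "lub tensor3 ((\<lambda>(a, b, c). etensor3 a b c) ` D) \<subseteq> D"
  proof (rule lub_tensor3_least[OF assms])
    fix E assume "E \<in> (\<lambda>(a, b, c). etensor3 a b c) ` D"
    then obtain a b c where "(a, b, c) \<in> D" "E = etensor3 a b c" by auto
    then show "E \<subseteq> D" using assms by (simp add: etensor3_subset_iff)
  qed
  show "D \<subseteq> lub tensor3 ((\<lambda>(a, b, c). etensor3 a b c) ` D)"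
  proof
    fix w assume "w \<in> D"
    obtain a b c where w: "w = (a, b, c)" by (cases w)
    have "w \<in> etensor3 a b c" by (simp add: w etensor3_def)
    also have "\<dots> \<subseteq> lub tensor3 ((\<lambda>(a, b, c). etensor3 a b c) ` D)"
      using \<open>w \<in> D\<close> by (intro lub_tensor3_upper) (auto simp: w)
    finally show "w \<in> lub tensor3 ((\<lambda>(a, b, c). etensor3 a b c) ` D)" .
  qed
qed

lemma lub_tensor2_etensor2:
  assumes "bi_ideal D"
  shows "lub tensor2 ((\<lambda>(a, b). etensor2 a b) ` D) = D"
proof
  show "lub tensor2 ((\<lambda>(a, b). etensor2 a b) ` D) \<subseteq> D"
  proof (rule lub_tensor2_least[OF assms])
    fix E assume "E \<in> (\<lambda>(a, b). etensor2 a b) ` D"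
    then obtain a b where "(a, b) \<in> D" "E = etensor2 a b" by auto
    then show "E \<subseteq> D" using assms by (simp add: etensor2_subset_iff)
  qed
  show "D \<subseteq> lub tensor2 ((\<lambda>(a, b). etensor2 a b) ` D)"
  proof
    fix w assume "w \<in> D"
    obtain a b where w: "w = (a, b)" by (cases w)
    have "w \<in> etensor2 a b" by (simp add: w etensor2_def)
    also have "\<dots> \<subseteq> lub tensor2 ((\<lambda>(a, b). etensor2 a b) ` D)"
      using \<open>w \<in> D\<close> by (intro lub_tensor2_upper) (auto simp: w)
    finally show "w \<in> lub tensor2 ((\<lambda>(a, b). etensor2 a b) ` D)" .
  qed
qed

lemma etensor3_eq_lub_tensor3:
  assumes "\<And>w. w \<in> W \<Longrightarrow> f w \<le> x \<and> g w \<le> y \<and> h w \<le> z"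
    and "\<And>E. tri_ideal E \<Longrightarrow> (\<And>w. w \<in> W \<Longrightarrow> (f w, g w, h w) \<in> E) \<Longrightarrow> (x, y, z) \<in> E"
  shows "etensor3 x y z = lub tensor3 ((\<lambda>w. etensor3 (f w) (g w) (h w)) ` W)"
    (is "_ = lub tensor3 ?Ds")
proof
  show "lub tensor3 ?Ds \<subseteq> etensor3 x y z"
  proof (rule lub_tensor3_least[OF tri_ideal_etensor3])
    fix E assume "E \<in> ?Ds"
    then obtain w where "w \<in> W" "E = etensor3 (f w) (g w) (h w)" by blast
    then show "E \<subseteq> etensor3 x y z" using assms(1) by (simp add: etensor3_mono)
  qed
  have "(f w, g w, h w) \<in> lub tensor3 ?Ds" if "w \<in> W" for w
    using that lub_tensor3_upper[of "etensor3 (f w) (g w) (h w)" ?Ds] by (auto simp: etensor3_def)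
  then show "etensor3 x y z \<subseteq> lub tensor3 ?Ds"
    by (simp add: etensor3_subset_iff tri_ideal_lub_tensor3 assms(2))
qed

lemma etensor3_Sup1: "etensor3 (Sup S) y z = lub tensor3 ((\<lambda>x. etensor3 x y z) ` S)"
  by (rule etensor3_eq_lub_tensor3) (auto intro: Sup_upper tri_ideal_Sup1)

lemma etensor3_Sup2: "etensor3 x (Sup S) z = lub tensor3 ((\<lambda>y. etensor3 x y z) ` S)"
  by (rule etensor3_eq_lub_tensor3) (auto intro: Sup_upper tri_ideal_Sup2)

lemma etensor3_Sup3: "etensor3 x y (Sup S) = lub tensor3 ((\<lambda>z. etensor3 x y z) ` S)"
  by (rule etensor3_eq_lub_tensor3) (auto intro: Sup_upper tri_ideal_Sup3)

section \<open>Trilinear maps and the universal property of the ternary tensor product\<close>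

definition trilinear ::
  "('a::complete_lattice \<Rightarrow> 'b::complete_lattice \<Rightarrow> 'c::complete_lattice \<Rightarrow> 'd::complete_lattice) \<Rightarrow> bool" where
  "trilinear t \<longleftrightarrow> (\<forall>S b c. t (Sup S) b c = (SUP a\<in>S. t a b c)) \<and>
     (\<forall>a T c. t a (Sup T) c = (SUP b\<in>T. t a b c)) \<and> (\<forall>a b U. t a b (Sup U) = (SUP c\<in>U. t a b c))"

lemma trilinearD:
  assumes "trilinear t"
  shows trilinear_Sup1: "t (Sup S) b c = (SUP a\<in>S. t a b c)"
    and trilinear_Sup2: "t a (Sup T) c = (SUP b\<in>T. t a b c)"
    and trilinear_Sup3: "t a b (Sup U) = (SUP c\<in>U. t a b c)"
  using assms unfolding trilinear_def by blast+

lemma trilinear_mono: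
  assumes "trilinear t" and "a \<le> a'" "b \<le> b'" "c \<le> c'"
  shows "t a b c \<le> t a' b' c'"
proof -
  have "t a b c \<le> t a' b c"
    using trilinear_Sup1[OF assms(1), of "{a, a'}"] assms(2) by (simp add: le_iff_sup)
  also have "\<dots> \<le> t a' b' c"
    using trilinear_Sup2[OF assms(1), of _ "{b, b'}"] assms(3) by (simp add: le_iff_sup)
  also have "\<dots> \<le> t a' b' c'"
    using trilinear_Sup3[OF assms(1), of _ _ "{c, c'}"] assms(4) by (simp add: le_iff_sup)
  finally show ?thesis .
qed

lemma trilinear_bot:
  assumes "trilinear t"
  shows "t bot b c = bot" "t a bot c = bot" "t a b bot = bot"
  using trilinear_Sup1[OF assms, of "{}"] trilinear_Sup2[OF assms, of _ "{}"]
    trilinear_Sup3[OF assms, of _ _ "{}"]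
  by simp_all

definition tensor3_lift ::
  "('a::complete_lattice \<Rightarrow> 'b::complete_lattice \<Rightarrow> 'c::complete_lattice \<Rightarrow> 'd::complete_lattice) \<Rightarrow>
   ('a \<times> 'b \<times> 'c) set \<Rightarrow> 'd" where
  "tensor3_lift t D = (SUP (a, b, c)\<in>D. t a b c)"

lemma tensor3_lift_mono: "D \<subseteq> E \<Longrightarrow> tensor3_lift t D \<le> tensor3_lift t E"
  unfolding tensor3_lift_def by (rule SUP_subset_mono) auto

lemma tensor3_lift_upper: "(a, b, c) \<in> D \<Longrightarrow> t a b c \<le> tensor3_lift t D"
  unfolding tensor3_lift_def by (rule SUP_upper2) auto

lemma tensor3_lift_etensor3:
  assumes "trilinear t"
  shows "tensor3_lift t (etensor3 x y z) = t x y z"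
proof (rule antisym)
  show "tensor3_lift t (etensor3 x y z) \<le> t x y z"
    unfolding tensor3_lift_def etensor3_def
    using trilinear_mono[OF assms] trilinear_bot[OF assms] by (auto intro!: SUP_least)
  show "t x y z \<le> tensor3_lift t (etensor3 x y z)"
    by (rule tensor3_lift_upper) (simp add: etensor3_def)
qed

lemma sup_preserving_tensor3_lift:
  assumes "trilinear t"
  shows "sup_preserving tensor3 tlat (tensor3_lift t)"
  unfolding sup_preserving_def lub_tlat
proof (intro conjI allI impI ballI)
  fix Ds :: "('a \<times> 'b \<times> 'c) set set"
  define m where "m = Sup (tensor3_lift t ` Ds)"
  have "tri_ideal {(a, b, c). t a b c \<le> m}"
    by (rule tri_idealI)
       (auto simp: trilinearD[OF assms] intro: order_trans[OF trilinear_mono[OF assms]] SUP_least)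
  moreover have "D \<subseteq> {(a, b, c). t a b c \<le> m}" if "D \<in> Ds" for D
    using that by (auto simp: m_def intro: order_trans[OF tensor3_lift_upper] SUP_upper)
  ultimately have "lub tensor3 Ds \<subseteq> {(a, b, c). t a b c \<le> m}"
    by (rule lub_tensor3_least)
  then have "tensor3_lift t (lub tensor3 Ds) \<le> m"
    unfolding tensor3_lift_def by (auto intro!: SUP_least)
  moreover have "m \<le> tensor3_lift t (lub tensor3 Ds)"
    unfolding m_def by (auto intro!: SUP_least tensor3_lift_mono lub_tensor3_upper)
  ultimately show "tensor3_lift t (lub tensor3 Ds) = Sup (tensor3_lift t ` Ds)"
    unfolding m_def by (rule antisym)
qed simp

lemma sup_preserving_tensor3_lub:
  "sup_preserving tensor3 tlat p \<Longrightarrow> Ds \<subseteq> carrier tensor3 \<Longrightarrow> p (lub tensor3 Ds) = Sup (p ` Ds)"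
  unfolding sup_preserving_def by simp

lemma sup_preserving_tensor3_eq_lift:
  assumes "sup_preserving tensor3 tlat p" and "D \<in> carrier tensor3"
  shows "p D = tensor3_lift (\<lambda>a b c. p (etensor3 a b c)) D"
proof -
  have "p D = p (lub tensor3 ((\<lambda>(a, b, c). etensor3 a b c) ` D))"
    using assms(2) by (simp add: carrier_tensor3 lub_tensor3_etensor3)
  also have "\<dots> = tensor3_lift (\<lambda>a b c. p (etensor3 a b c)) D"
    using assms(1) by (subst sup_preserving_tensor3_lub)
      (auto simp: carrier_tensor3 tri_ideal_etensor3 tensor3_lift_def image_image case_prod_unfold)
  finally show ?thesis .
qed

lemma trilinear_sup_preserving_tensor3:
  assumes "sup_preserving tensor3 tlat p"
  shows "trilinear (\<lambda>a b c. p (etensor3 a b c))"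
  unfolding trilinear_def etensor3_Sup1 etensor3_Sup2 etensor3_Sup3
  using sup_preserving_tensor3_lub[OF assms]
  by (simp add: carrier_tensor3 tri_ideal_etensor3 image_subset_iff image_image)

lemma sup_preserving_tensor3_image:
  assumes "sup_preserving tensor3 tlat p"
  shows "p ` carrier tensor3 = range (tensor3_lift (\<lambda>a b c. p (etensor3 a b c)))"
proof (intro equalityI subsetI)
  fix x assume "x \<in> p ` carrier tensor3"
  then show "x \<in> range (tensor3_lift (\<lambda>a b c. p (etensor3 a b c)))"
    using sup_preserving_tensor3_eq_lift[OF assms] by auto
next
  fix x assume "x \<in> range (tensor3_lift (\<lambda>a b c. p (etensor3 a b c)))"
  then obtain T where "x = tensor3_lift (\<lambda>a b c. p (etensor3 a b c)) T" by blast
  also have "\<dots> = p (lub tensor3 ((\<lambda>(a, b, c). etensor3 a b c) ` T))"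
    using assms by (subst sup_preserving_tensor3_lub)
      (auto simp: carrier_tensor3 tri_ideal_etensor3 tensor3_lift_def image_image case_prod_unfold)
  finally show "x \<in> p ` carrier tensor3"
    by (simp add: carrier_tensor3 tri_ideal_lub_tensor3)
qed

lemma tensor3_lift_image:
  assumes "trilinear t"
  shows "tensor3_lift t ` carrier tensor3 = range (tensor3_lift t)"
  using sup_preserving_tensor3_image[OF sup_preserving_tensor3_lift[OF assms]]
  by (simp add: tensor3_lift_etensor3[OF assms])

lemma mregular_quantaleI:
  assumes "quantale A"
    and "\<And>m. m \<in> carrier A \<Longrightarrow>
      \<exists>S. S \<subseteq> {mult A a b |a b. a \<in> carrier A \<and> b \<in> carrier A} \<and> m = lub A S"
    and "\<And>m n. m \<in> carrier A \<Longrightarrow> n \<in> carrier A \<Longrightarrow>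
      (\<And>a. a \<in> carrier A \<Longrightarrow> mult A a m = mult A a n) \<Longrightarrow> m = n"
    and "\<And>m n. m \<in> carrier A \<Longrightarrow> n \<in> carrier A \<Longrightarrow>
      (\<And>a. a \<in> carrier A \<Longrightarrow> mult A m a = mult A n a) \<Longrightarrow> m = n"
  shows "mregular_quantale A"
proof -
  have "left_module A A (mult A)" and "right_module A A (mult A)"
    using assms(1) unfolding left_module_def right_module_def quantale_def by simp_all
  moreover have "\<forall>m\<in>carrier A. \<forall>n\<in>carrier A. (\<forall>a\<in>carrier A. mult A a m = mult A a n) \<longrightarrow> m = n"
    and "\<forall>m\<in>carrier A. \<forall>n\<in>carrier A. (\<forall>a\<in>carrier A. mult A m a = mult A n a) \<longrightarrow> m = n"
    using assms(3,4) by blast+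
  ultimately show ?thesis
    using assms(1,2) unfolding mregular_quantale_def mregular_bimodule_def left_mregular_def
      right_mregular_def
    by (simp add: quantale_def)
qed

lemma left_mregular_tlatD:
  assumes "left_mregular A tlat act"
  shows left_act_lub: "S \<subseteq> carrier A \<Longrightarrow> act (lub A S) m = (SUP a\<in>S. act a m)"
    and left_act_Sup: "a \<in> carrier A \<Longrightarrow> act a (Sup M) = (SUP m\<in>M. act a m)"
    and left_act_mult: "a \<in> carrier A \<Longrightarrow> b \<in> carrier A \<Longrightarrow> act (mult A a b) m = act a (act b m)"
    and left_act_essential: "\<exists>S. S \<subseteq> {act a n |a n. a \<in> carrier A} \<and> m = Sup S"
    and left_act_separated: "(\<And>a. a \<in> carrier A \<Longrightarrow> act a m = act a n) \<Longrightarrow> m = n"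
  using assms unfolding left_mregular_def left_module_def by simp_all

lemma right_mregular_tlatD:
  assumes "right_mregular A tlat act"
  shows right_act_lub: "S \<subseteq> carrier A \<Longrightarrow> act m (lub A S) = (SUP a\<in>S. act m a)"
    and right_act_separated: "(\<And>a. a \<in> carrier A \<Longrightarrow> act m a = act n a) \<Longrightarrow> m = n"
  using assms unfolding right_mregular_def right_module_def by simp_all

section \<open>From a Morita context to ternary operations\<close>

lemma lub_pairs_of_tensor2_surj:
  assumes "\<exists>f. sup_preserving tensor2 A f \<and> (\<forall>x y. f (etensor2 x y) = pr x y) \<and>
      f ` carrier tensor2 = carrier A"
    and "a \<in> carrier A"
  shows "\<exists>D. a = lub A ((\<lambda>(x, y). pr x y) ` D)"
proof -
  from assms(1) obtain f where f: "sup_preserving tensor2 A f" "\<And>x y. f (etensor2 x y) = pr x y"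
    "f ` carrier tensor2 = carrier A" by blast
  obtain D where D: "bi_ideal D" "a = f D"
    using f(3) assms(2) by (auto simp: carrier_tensor2)
  have "f D = f (lub tensor2 ((\<lambda>(x, y). etensor2 x y) ` D))"
    by (simp add: lub_tensor2_etensor2 D(1))
  also have "\<dots> = lub A (f ` (\<lambda>(x, y). etensor2 x y) ` D)"
    using f(1) unfolding sup_preserving_def
    by (simp add: carrier_tensor2 bi_ideal_etensor2 image_subset_iff case_prod_unfold)
  also have "\<dots> = lub A ((\<lambda>(x, y). pr x y) ` D)"
    by (simp add: image_image case_prod_unfold f(2))
  finally show ?thesis using D(2) by blast
qed

lemma morita_context_sym:
  "morita_context A B lX rX lY rY pr br \<Longrightarrow> morita_context B A lY rY lX rX br pr"
  unfolding morita_context_def by (elim conjE) (intro conjI; assumption)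

context
  fixes A :: "'a quantale" and B :: "'b quantale"
    and lX :: "'a \<Rightarrow> 'x::complete_lattice \<Rightarrow> 'x" and rX :: "'x \<Rightarrow> 'b \<Rightarrow> 'x"
    and lY :: "'b \<Rightarrow> 'y::complete_lattice \<Rightarrow> 'y" and rY :: "'y \<Rightarrow> 'a \<Rightarrow> 'y"
    and pr :: "'x \<Rightarrow> 'y \<Rightarrow> 'a" and br :: "'y \<Rightarrow> 'x \<Rightarrow> 'b"
  assumes mc: "morita_context A B lX rX lY rY pr br"
begin

lemma left_mregular_X: "left_mregular A tlat lX"
  and right_mregular_X: "right_mregular B tlat rX"
  and pr_in_carrier: "pr x y \<in> carrier A"
  and br_in_carrier: "br y x \<in> carrier B"
  and pr_Sup1: "pr (Sup S) y = lub A ((\<lambda>x. pr x y) ` S)"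
  and pr_Sup2: "pr x (Sup T) = lub A (pr x ` T)"
  and pr_left_act: "a \<in> carrier A \<Longrightarrow> pr (lX a x) y = mult A a (pr x y)"
  and pr_balanced: "b \<in> carrier B \<Longrightarrow> pr (rX x b) y = pr x (lY b y)"
  and left_act_pr: "lX (pr x1 y) x2 = rX x1 (br y x2)"
  using mc unfolding morita_context_def mregular_bimodule_def by simp_all

lemma lub_pr_pairs: "a \<in> carrier A \<Longrightarrow> \<exists>D. a = lub A ((\<lambda>(x, y). pr x y) ` D)"
  using mc unfolding morita_context_def by (elim conjE) (rule lub_pairs_of_tensor2_surj)

lemma left_act_eq_SUP_pr: "a \<in> carrier A \<Longrightarrow> \<exists>D. \<forall>m. lX a m = (SUP (x, y)\<in>D. lX (pr x y) m)"
proof -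
  assume "a \<in> carrier A"
  then obtain D where "a = lub A ((\<lambda>(x, y). pr x y) ` D)" using lub_pr_pairs by blast
  then show ?thesis
    using left_act_lub[OF left_mregular_X, of "(\<lambda>(x, y). pr x y) ` D"] pr_in_carrier
    by (auto simp: image_image case_prod_unfold)
qed

lemma lub_br_pairs: "b \<in> carrier B \<Longrightarrow> \<exists>D. b = lub B ((\<lambda>(y, x). br y x) ` D)"
  using mc unfolding morita_context_def by (elim conjE) (rule lub_pairs_of_tensor2_surj)

lemma right_act_eq_SUP_br: "b \<in> carrier B \<Longrightarrow> \<exists>D. \<forall>m. rX m b = (SUP (y, x)\<in>D. rX m (br y x))"
proof -
  assume "b \<in> carrier B"
  then obtain D where "b = lub B ((\<lambda>(y, x). br y x) ` D)" using lub_br_pairs by blast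
  then show ?thesis
    using right_act_lub[OF right_mregular_X, of "(\<lambda>(y, x). br y x) ` D"] br_in_carrier
    by (auto simp: image_image case_prod_unfold)
qed

lemma trilinear_left_act_pr: "trilinear (\<lambda>x y x'. lX (pr x y) x')"
  unfolding trilinear_def
  using left_act_lub[OF left_mregular_X] left_act_Sup[OF left_mregular_X] pr_in_carrier
  by (auto simp: pr_Sup1 pr_Sup2 image_subset_iff image_image)

lemma surj_tensor3_lift_left_act_pr: "surj (tensor3_lift (\<lambda>x y x'. lX (pr x y) x'))"
proof (rule surjI)
  fix x :: 'x
  \<comment> \<open>\<open>x\<close> is the join of all \<open>lX (pr u v) n\<close> below it, as \<open>X\<close> is essential and every
    element of \<open>A\<close> is a join of pairings\<close>
  let ?T = "{(u, v, n). lX (pr u v) n \<le> x}"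
  show "tensor3_lift (\<lambda>x y x'. lX (pr x y) x') ?T = x"
  proof (rule antisym)
    show "tensor3_lift (\<lambda>x y x'. lX (pr x y) x') ?T \<le> x"
      unfolding tensor3_lift_def by (auto intro: SUP_least)
    obtain S where S: "S \<subseteq> {lX a n |a n. a \<in> carrier A}" "x = Sup S"
      using left_act_essential[OF left_mregular_X] by blast
    have "s \<le> tensor3_lift (\<lambda>x y x'. lX (pr x y) x') ?T" if "s \<in> S" for s
    proof -
      obtain a n where a: "a \<in> carrier A" "s = lX a n" using S(1) \<open>s \<in> S\<close> by blast
      then obtain D where D: "s = (SUP (u, v)\<in>D. lX (pr u v) n)"
        using left_act_eq_SUP_pr by blast
      have "lX (pr u v) n \<le> x" if "(u, v) \<in> D" for u v
        using that S(2) \<open>s \<in> S\<close> by (auto simp: D intro: SUP_upper2 Sup_upper2)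
      then show ?thesis
        unfolding D by (auto intro!: SUP_least tensor3_lift_upper)
    qed
    then show "x \<le> tensor3_lift (\<lambda>x y x'. lX (pr x y) x') ?T"
      unfolding S(2) by (rule Sup_least)
  qed
qed

lemma left_act_pr_assoc_left: "lX (pr (lX (pr x1 y1) x2) y2) x3 = lX (pr x1 (lY (br y1 x2) y2)) x3"
  by (simp add: left_act_pr pr_balanced br_in_carrier)

lemma left_act_pr_assoc_right: "lX (pr x1 (lY (br y1 x2) y2)) x3 = lX (pr x1 y1) (lX (pr x2 y2) x3)"
  by (simp add: left_act_pr_assoc_left[symmetric] pr_left_act pr_in_carrier
      left_act_mult[OF left_mregular_X])

lemma left_act_pr_separated_right:
  assumes "\<And>u v. lX (pr u v) x1 = lX (pr u v) x2"
  shows "x1 = x2"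
proof (rule left_act_separated[OF left_mregular_X])
  fix a assume "a \<in> carrier A"
  then obtain D where "\<forall>m. lX a m = (SUP (u, v)\<in>D. lX (pr u v) m)"
    using left_act_eq_SUP_pr by blast
  then show "lX a x1 = lX a x2" by (simp add: assms)
qed

lemma left_act_pr_separated_left:
  assumes "\<And>u v. lX (pr x1 v) u = lX (pr x2 v) u"
  shows "x1 = x2"
proof (rule right_act_separated[OF right_mregular_X])
  fix b assume "b \<in> carrier B"
  then obtain D where "\<forall>m. rX m b = (SUP (v, u)\<in>D. rX m (br v u))"
    using right_act_eq_SUP_br by blast
  then show "rX x1 b = rX x2 b" by (simp add: assms flip: left_act_pr)
qed

end

section \<open>The quantale of formal joins of pairs\<close>

definition pair_act :: "('x \<Rightarrow> 'y \<Rightarrow> 'z \<Rightarrow> 'z::complete_lattice) \<Rightarrow> ('x \<times> 'y) set \<Rightarrow> 'z \<Rightarrow> 'z" where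
  "pair_act P S z = (SUP (x, y)\<in>S. P x y z)"

definition pair_ract :: "('z \<Rightarrow> 'x \<Rightarrow> 'y \<Rightarrow> 'z::complete_lattice) \<Rightarrow> 'z \<Rightarrow> ('x \<times> 'y) set \<Rightarrow> 'z" where
  "pair_ract Q z S = (SUP (x, y)\<in>S. Q z x y)"

text \<open>An element of the quantale built from \<open>P\<close> is represented by the largest set of pairs
  with a given action \<open>pair_act P S\<close>, so the carrier is the set of formal joins of pairs modulo
  the kernel of the action.\<close>

definition pair_closure ::
  "('x \<Rightarrow> 'y \<Rightarrow> 'z \<Rightarrow> 'z::complete_lattice) \<Rightarrow> ('x \<times> 'y) set \<Rightarrow> ('x \<times> 'y) set" where
  "pair_closure P S = {(x, y). \<forall>z. P x y z \<le> pair_act P S z}"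

definition pairing :: "('x \<Rightarrow> 'y \<Rightarrow> 'z \<Rightarrow> 'z::complete_lattice) \<Rightarrow> 'x \<Rightarrow> 'y \<Rightarrow> ('x \<times> 'y) set" where
  "pairing P x y = pair_closure P {(x, y)}"

definition pair_mult :: "('x \<Rightarrow> 'y \<Rightarrow> 'x \<Rightarrow> 'x) \<Rightarrow> ('x \<times> 'y) set \<Rightarrow> ('x \<times> 'y) set \<Rightarrow> ('x \<times> 'y) set" where
  "pair_mult P S T = (\<lambda>((x, y), (x', y')). (P x y x', y')) ` (S \<times> T)"

definition pair_quantale :: "('x \<Rightarrow> 'y \<Rightarrow> 'x \<Rightarrow> 'x::complete_lattice) \<Rightarrow> ('x \<times> 'y) set quantale" where
  "pair_quantale P =
     \<lparr>carrier = range (pair_closure P), le = (\<subseteq>), mult = (\<lambda>S T. pair_closure P (pair_mult P S T))\<rparr>"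

lemma pair_act_singleton [simp]: "pair_act P {(x, y)} z = P x y z"
  by (simp add: pair_act_def)

lemma pair_act_Union: "pair_act P (\<Union>Ss) z = (SUP S\<in>Ss. pair_act P S z)"
  unfolding pair_act_def using SUP_UNION[of _ "\<lambda>S. S" Ss] by simp

lemma pair_act_mono: "S \<subseteq> T \<Longrightarrow> pair_act P S z \<le> pair_act P T z"
  unfolding pair_act_def by (rule SUP_subset_mono) auto

lemma pair_act_upper: "(x, y) \<in> S \<Longrightarrow> P x y z \<le> pair_act P S z"
  unfolding pair_act_def by (rule SUP_upper2) auto

lemma pair_act_least: "(\<And>x y. (x, y) \<in> S \<Longrightarrow> P x y z \<le> u) \<Longrightarrow> pair_act P S z \<le> u"
  unfolding pair_act_def by (rule SUP_least) auto

lemma subset_pair_closure: "S \<subseteq> pair_closure P S"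
  by (auto simp: pair_closure_def intro: pair_act_upper)

lemma pair_act_pair_closure [simp]: "pair_act P (pair_closure P S) = pair_act P S"
proof (rule ext, rule antisym)
  show "pair_act P (pair_closure P S) z \<le> pair_act P S z" for z
    unfolding pair_act_def[of P "pair_closure P S"] by (auto simp: pair_closure_def intro: SUP_least)
  show "pair_act P S z \<le> pair_act P (pair_closure P S) z" for z
    by (rule pair_act_mono[OF subset_pair_closure])
qed

lemma pair_closure_subset_iff:
  "pair_closure P S \<subseteq> pair_closure P T \<longleftrightarrow> (\<forall>z. pair_act P S z \<le> pair_act P T z)"
proof
  assume "pair_closure P S \<subseteq> pair_closure P T"
  then show "\<forall>z. pair_act P S z \<le> pair_act P T z"
    by (metis pair_act_mono pair_act_pair_closure)
qed (auto simp: pair_closure_def intro: order_trans)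

lemma pair_closure_eq_iff: "pair_closure P S = pair_closure P T \<longleftrightarrow> pair_act P S = pair_act P T"
proof
  assume "pair_closure P S = pair_closure P T"
  then show "pair_act P S = pair_act P T" by (metis pair_act_pair_closure)
qed (simp add: pair_closure_def)

lemma pair_closure_idem [simp]: "pair_closure P (pair_closure P S) = pair_closure P S"
  by (simp add: pair_closure_eq_iff)

lemma carrier_pair_quantale: "carrier (pair_quantale P) = range (pair_closure P)"
  and le_pair_quantale [simp]: "le (pair_quantale P) = (\<subseteq>)"
  and mult_pair_quantale: "mult (pair_quantale P) S T = pair_closure P (pair_mult P S T)"
  by (simp_all add: pair_quantale_def)

lemma mult_in_carrier: "mult (pair_quantale P) S T \<in> carrier (pair_quantale P)"
  by (simp add: mult_pair_quantale carrier_pair_quantale)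

lemma in_carrier_pair_quantale_iff: "S \<in> carrier (pair_quantale P) \<longleftrightarrow> pair_closure P S = S"
  by (auto simp: carrier_pair_quantale)

lemma pair_closure_in_carrier [simp]: "pair_closure P S \<in> carrier (pair_quantale P)"
  by (simp add: carrier_pair_quantale)

lemma pair_quantale_eqI:
  assumes "S \<in> carrier (pair_quantale P)" "T \<in> carrier (pair_quantale P)"
    and "\<And>z. pair_act P S z = pair_act P T z"
  shows "S = T"
  using assms pair_closure_eq_iff[of P S T] by (simp add: in_carrier_pair_quantale_iff fun_eq_iff)

lemma is_lub_pair_quantale:
  assumes "Ss \<subseteq> carrier (pair_quantale P)"
  shows "is_lub (pair_quantale P) Ss (pair_closure P (\<Union>Ss))"
  unfolding is_lub_def le_pair_quantale
proof (intro conjI ballI impI)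
  fix S assume "S \<in> Ss"
  then have "S = pair_closure P S" using assms by (auto simp: in_carrier_pair_quantale_iff)
  also have "\<dots> \<subseteq> pair_closure P (\<Union>Ss)"
    using \<open>S \<in> Ss\<close> by (auto simp: pair_closure_subset_iff intro: pair_act_mono)
  finally show "S \<subseteq> pair_closure P (\<Union>Ss)" .
next
  fix T assume "T \<in> carrier (pair_quantale P)" "\<forall>S\<in>Ss. S \<subseteq> T"
  then have "pair_closure P (\<Union>Ss) \<subseteq> pair_closure P T"
    by (auto simp: pair_closure_subset_iff intro: pair_act_mono)
  then show "pair_closure P (\<Union>Ss) \<subseteq> T"
    using \<open>T \<in> carrier (pair_quantale P)\<close> by (simp add: in_carrier_pair_quantale_iff)
qed simp

lemma lub_pair_quantale:
  "Ss \<subseteq> carrier (pair_quantale P) \<Longrightarrow> lub (pair_quantale P) Ss = pair_closure P (\<Union>Ss)"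
  by (rule lub_eqI[OF is_lub_pair_quantale]) auto

lemma lub_pair_quantale_in_carrier:
  "Ss \<subseteq> carrier (pair_quantale P) \<Longrightarrow> lub (pair_quantale P) Ss \<in> carrier (pair_quantale P)"
  by (simp add: lub_pair_quantale)

lemma sup_lattice_pair_quantale: "sup_lattice (pair_quantale P)"
  unfolding sup_lattice_def using is_lub_pair_quantale by auto

lemma pair_act_lub:
  "Ss \<subseteq> carrier (pair_quantale P) \<Longrightarrow> pair_act P (lub (pair_quantale P) Ss) z = (SUP S\<in>Ss. pair_act P S z)"
  by (simp add: lub_pair_quantale pair_act_Union)

lemma pair_act_pairing [simp]: "pair_act P (pairing P x y) z = P x y z"
  by (simp add: pairing_def)

lemma pairing_in_carrier [simp]: "pairing P x y \<in> carrier (pair_quantale P)"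
  by (simp add: pairing_def)

lemma pairing_subset_iff:
  assumes "m \<in> carrier (pair_quantale P)"
  shows "pairing P x y \<subseteq> m \<longleftrightarrow> (x, y) \<in> m"
proof -
  have "pairing P x y \<subseteq> pair_closure P m \<longleftrightarrow> (x, y) \<in> pair_closure P m"
    unfolding pairing_def pair_closure_subset_iff by (simp add: pair_closure_def)
  then show ?thesis using assms by (simp add: in_carrier_pair_quantale_iff)
qed

locale ternary_action =
  fixes P :: "'x::complete_lattice \<Rightarrow> 'y::complete_lattice \<Rightarrow> 'x \<Rightarrow> 'x"
  assumes trilinear: "trilinear P"
    and assoc: "P (P x1 y1 x2) y2 x3 = P x1 y1 (P x2 y2 x3)"
    and surj_tensor3_lift: "surj (tensor3_lift P)"
    and separated_right: "(\<And>u v. P u v x1 = P u v x2) \<Longrightarrow> x1 = x2"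
begin

lemmas P_Sup1 = trilinear_Sup1[OF trilinear]
  and P_Sup2 = trilinear_Sup2[OF trilinear]
  and P_Sup3 = trilinear_Sup3[OF trilinear]
  and P_mono = trilinear_mono[OF trilinear]

lemma obtain_SUP_P:
  obtains T where "x = (SUP (a, b, c)\<in>T. P a b c)"
  using surjD[OF surj_tensor3_lift, of x] that unfolding tensor3_lift_def by blast

lemma pair_act_Sup: "pair_act P S (Sup Z) = (SUP z\<in>Z. pair_act P S z)"
  unfolding pair_act_def P_Sup3 case_prod_unfold by (rule SUP_commute)

lemma pair_act_pair_mult: "pair_act P (pair_mult P S T) z = pair_act P S (pair_act P T z)"
proof -
  have "pair_act P (pair_mult P S T) z = (SUP (x, y)\<in>S. SUP (x', y')\<in>T. P (P x y x') y' z)"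
    by (simp add: pair_act_def pair_mult_def image_image SUP_Times case_prod_unfold)
  also have "\<dots> = pair_act P S (pair_act P T z)"
    by (simp add: pair_act_def P_Sup3 assoc image_image case_prod_unfold)
  finally show ?thesis .
qed

lemma pair_act_mult: "pair_act P (mult (pair_quantale P) S T) z = pair_act P S (pair_act P T z)"
  by (simp add: mult_pair_quantale pair_act_pair_mult)

lemma quantale_pair_quantale: "quantale (pair_quantale P)"
  unfolding quantale_def
proof (intro conjI ballI allI impI)
  fix a b c assume "a \<in> carrier (pair_quantale P)" "b \<in> carrier (pair_quantale P)"
    "c \<in> carrier (pair_quantale P)"
  show "mult (pair_quantale P) (mult (pair_quantale P) a b) c =
      mult (pair_quantale P) a (mult (pair_quantale P) b c)"
    by (rule pair_quantale_eqI[where P = P]) (simp_all add: mult_in_carrier pair_act_mult)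
next
  fix a S assume S: "S \<subseteq> carrier (pair_quantale P)"
  have "mult (pair_quantale P) a ` S \<subseteq> carrier (pair_quantale P)"
    and "(\<lambda>s. mult (pair_quantale P) s a) ` S \<subseteq> carrier (pair_quantale P)"
    by (auto simp: mult_in_carrier)
  then show "mult (pair_quantale P) a (lub (pair_quantale P) S) =
      lub (pair_quantale P) (mult (pair_quantale P) a ` S)"
    and "mult (pair_quantale P) (lub (pair_quantale P) S) a =
      lub (pair_quantale P) ((\<lambda>s. mult (pair_quantale P) s a) ` S)"
    by (intro pair_quantale_eqI[where P = P];
        simp add: S mult_in_carrier lub_pair_quantale_in_carrier pair_act_mult pair_act_lub
          pair_act_Sup image_image)+
qed (simp_all add: sup_lattice_pair_quantale mult_in_carrier)

lemma P_pair_act: "P (pair_act P S x) y z = pair_act P S (P x y z)"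
  by (simp add: pair_act_def P_Sup1 image_image assoc case_prod_unfold)

lemma pairing_pair_act: "pairing P (pair_act P S x) y = mult (pair_quantale P) S (pairing P x y)"
  by (rule pair_quantale_eqI[where P = P]) (simp_all add: mult_in_carrier pair_act_mult P_pair_act)

lemma mult_pairing: "mult (pair_quantale P) (pairing P a b) (pairing P c y) = pairing P (P a b c) y"
  by (simp flip: pairing_pair_act)

lemma pairing_Sup1: "pairing P (Sup S) y = lub (pair_quantale P) ((\<lambda>x. pairing P x y) ` S)"
  by (rule pair_quantale_eqI[where P = P])
    (auto simp: lub_pair_quantale_in_carrier pair_act_lub image_subset_iff image_image P_Sup1)

lemma pairing_Sup2: "pairing P x (Sup T) = lub (pair_quantale P) (pairing P x ` T)"
  by (rule pair_quantale_eqI[where P = P])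
    (auto simp: lub_pair_quantale_in_carrier pair_act_lub image_subset_iff image_image P_Sup2)

lemma pair_ract_pair_act_comm: "pair_ract P (pair_act P a m) b = pair_act P a (pair_ract P m b)"
proof -
  have "pair_ract P (pair_act P a m) b = (SUP (y, x)\<in>b. SUP (u, v)\<in>a. P u v (P m y x))"
    by (simp add: pair_ract_def pair_act_def P_Sup1 image_image case_prod_unfold assoc)
  also have "\<dots> = pair_act P a (pair_ract P m b)"
    unfolding pair_ract_def pair_act_def P_Sup3
    by (simp add: image_image case_prod_unfold SUP_commute[of _ b])
  finally show ?thesis .
qed

lemma bi_ideal_pair_closure: "bi_ideal (pair_closure P S)"
proof (rule bi_idealI)
  fix a b a' b' assume "(a, b) \<in> pair_closure P S" "a' \<le> a" "b' \<le> b"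
  then show "(a', b') \<in> pair_closure P S"
    by (auto simp: pair_closure_def intro: order_trans[OF P_mono[OF _ _ order_refl]])
qed (auto simp: pair_closure_def P_Sup1 P_Sup2 intro: SUP_least)

lemma left_mregular_pair_act: "left_mregular (pair_quantale P) tlat (pair_act P)"
  unfolding left_mregular_def left_module_def
proof (intro conjI ballI allI impI)
  fix m :: 'x
  obtain T where T: "m = (SUP (a, b, c)\<in>T. P a b c)" by (rule obtain_SUP_P)
  let ?S = "(\<lambda>(a, b, c). pair_act P (pairing P a b) c) ` T"
  have "?S \<subseteq> {pair_act P a n |a n. a \<in> carrier (pair_quantale P) \<and> n \<in> carrier tlat}"
    by (auto simp del: pair_act_pairing)
  moreover have "m = lub tlat ?S"
    by (simp add: T image_image case_prod_unfold)
  ultimately show "\<exists>S. S \<subseteq> {pair_act P a n |a n. a \<in> carrier (pair_quantale P) \<and> n \<in> carrier tlat} \<and>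
      m = lub tlat S" by blast
next
  fix m n :: 'x
  assume eq: "\<forall>a\<in>carrier (pair_quantale P). pair_act P a m = pair_act P a n"
  have "P u v m = P u v n" for u v
    using eq[rule_format, OF pairing_in_carrier[of P u v]] by simp
  then show "m = n" by (rule separated_right)
qed (simp_all add: quantale_pair_quantale sup_lattice_tlat pair_act_mult pair_act_Sup pair_act_lub)

lemma lub_products_pair_quantale:
  assumes m: "m \<in> carrier (pair_quantale P)"
  shows "m = lub (pair_quantale P) {mult (pair_quantale P) a b |a b.
    a \<in> carrier (pair_quantale P) \<and> b \<in> carrier (pair_quantale P) \<and> mult (pair_quantale P) a b \<subseteq> m}"
    (is "m = lub ?A ?S")
proof -
  \<comment> \<open>for \<open>(x, y) \<in> m\<close>, \<open>x\<close> is a join of values \<open>P a b c\<close>, and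
    \<open>pairing P a b \<cdot> pairing P c y = pairing P (P a b c) y \<subseteq> m\<close>\<close>
  have S: "?S \<subseteq> carrier ?A" by (auto simp: mult_in_carrier)
  have bi: "bi_ideal m"
    using m bi_ideal_pair_closure[of m] by (simp add: in_carrier_pair_quantale_iff)
  show ?thesis
  proof (rule pair_quantale_eqI[OF m lub_pair_quantale_in_carrier[OF S]], rule antisym)
    fix z
    show "pair_act P (lub ?A ?S) z \<le> pair_act P m z"
      unfolding pair_act_lub[OF S] by (rule SUP_least) (auto intro: pair_act_mono)
    have key: "P (P a b c) y z \<le> pair_act P (lub ?A ?S) z" if "(P a b c, y) \<in> m" for a b c y
    proof -
      have "mult ?A (pairing P a b) (pairing P c y) \<subseteq> m"
        using that m by (simp add: mult_pairing pairing_subset_iff)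
      then have "mult ?A (pairing P a b) (pairing P c y) \<in> ?S"
        by (intro CollectI exI[of _ "pairing P a b"] exI[of _ "pairing P c y"]) simp
      then have "pair_act P (mult ?A (pairing P a b) (pairing P c y)) z \<le> pair_act P (lub ?A ?S) z"
        unfolding pair_act_lub[OF S] by (rule SUP_upper)
      then show ?thesis by (simp add: mult_pairing)
    qed
    show "pair_act P m z \<le> pair_act P (lub ?A ?S) z"
    proof (rule pair_act_least)
      fix x y assume "(x, y) \<in> m"
      obtain T where T: "x = (SUP (a, b, c)\<in>T. P a b c)" by (rule obtain_SUP_P)
      have "(P a b c, y) \<in> m" if "(a, b, c) \<in> T" for a b c
      proof (rule bi_ideal_downward[OF bi \<open>(x, y) \<in> m\<close> _ order_refl])
        show "P a b c \<le> x" unfolding T by (rule SUP_upper2[OF that]) simp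
      qed
      then show "P x y z \<le> pair_act P (lub ?A ?S) z"
        unfolding T P_Sup1 by (auto intro!: SUP_least key)
    qed
  qed
qed

lemma pair_quantale_separated_left:
  assumes "m \<in> carrier (pair_quantale P)" "n \<in> carrier (pair_quantale P)"
    and "\<And>a. a \<in> carrier (pair_quantale P) \<Longrightarrow>
      mult (pair_quantale P) a m = mult (pair_quantale P) a n"
  shows "m = n"
proof (rule pair_quantale_eqI[OF assms(1,2)], rule separated_right)
  fix z u v
  show "P u v (pair_act P m z) = P u v (pair_act P n z)"
    using arg_cong[OF assms(3)[OF pairing_in_carrier[of P u v]], of "\<lambda>S. pair_act P S z"]
    by (simp add: pair_act_mult)
qed

lemma pair_quantale_separated_right:
  assumes "m \<in> carrier (pair_quantale P)" "n \<in> carrier (pair_quantale P)"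
    and "\<And>a. a \<in> carrier (pair_quantale P) \<Longrightarrow>
      mult (pair_quantale P) m a = mult (pair_quantale P) n a"
  shows "m = n"
proof (rule pair_quantale_eqI[OF assms(1,2)])
  fix z
  obtain T where T: "z = (SUP (a, b, c)\<in>T. P a b c)" by (rule obtain_SUP_P)
  have "pair_act P m (P a b c) = pair_act P n (P a b c)" for a b c
    using arg_cong[OF assms(3)[OF pairing_in_carrier[of P a b]], of "\<lambda>S. pair_act P S c"]
    by (simp add: pair_act_mult)
  then show "pair_act P m z = pair_act P n z"
    by (simp add: T pair_act_Sup image_image case_prod_unfold)
qed

lemma mregular_quantale_pair_quantale: "mregular_quantale (pair_quantale P)"
proof (rule mregular_quantaleI[OF quantale_pair_quantale])
  fix m assume "m \<in> carrier (pair_quantale P)"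
  from lub_products_pair_quantale[OF this]
  show "\<exists>S. S \<subseteq> {mult (pair_quantale P) a b |a b.
      a \<in> carrier (pair_quantale P) \<and> b \<in> carrier (pair_quantale P)} \<and> m = lub (pair_quantale P) S"
    by (intro exI conjI[rotated]) auto
qed (fact pair_quantale_separated_left pair_quantale_separated_right)+

lemma pair_closure_etensor2: "pair_closure P (etensor2 x y) = pairing P x y"
  unfolding pairing_def pair_closure_eq_iff
proof (rule ext, rule antisym)
  fix z
  show "pair_act P (etensor2 x y) z \<le> pair_act P {(x, y)} z"
    unfolding pair_act_def etensor2_def
    by (auto intro!: SUP_least intro: P_mono simp: trilinear_bot[OF trilinear])
  show "pair_act P {(x, y)} z \<le> pair_act P (etensor2 x y) z"
    by (rule pair_act_mono) (simp add: etensor2_def)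
qed

lemma sup_preserving_pair_closure: "sup_preserving tensor2 (pair_quantale P) (pair_closure P)"
  unfolding sup_preserving_def
proof (intro conjI ballI allI impI)
  fix Ds :: "('x \<times> 'y) set set"
  have Ds: "pair_closure P ` Ds \<subseteq> carrier (pair_quantale P)" by auto
  have lower: "\<Union>Ds \<subseteq> lub tensor2 Ds"
    using lub_tensor2_upper by blast
  have upper: "lub tensor2 Ds \<subseteq> pair_closure P (\<Union>Ds)"
    by (rule lub_tensor2_least[OF bi_ideal_pair_closure]) (use subset_pair_closure in blast)
  have "pair_act P (lub tensor2 Ds) = pair_act P (\<Union>Ds)"
    using pair_act_mono[OF lower, of P] pair_act_mono[OF upper, of P]
    by (simp add: fun_eq_iff antisym)
  also have "\<dots> = pair_act P (\<Union>(pair_closure P ` Ds))"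
    by (simp add: fun_eq_iff pair_act_Union image_image)
  finally show "pair_closure P (lub tensor2 Ds) = lub (pair_quantale P) (pair_closure P ` Ds)"
    by (simp add: lub_pair_quantale[OF Ds] pair_closure_eq_iff)
qed simp

lemma pair_closure_image_tensor2: "pair_closure P ` carrier tensor2 = carrier (pair_quantale P)"
proof (intro equalityI subsetI)
  fix D assume "D \<in> carrier (pair_quantale P)"
  then have "D = pair_closure P D" by (simp add: in_carrier_pair_quantale_iff)
  moreover have "D \<in> carrier tensor2"
    using bi_ideal_pair_closure[of D] \<open>D = pair_closure P D\<close> by (simp add: carrier_tensor2)
  ultimately show "D \<in> pair_closure P ` carrier tensor2" by blast
qed auto

end

text \<open>\<open>P\<close> and \<open>Q\<close> stand for \<open>p\<close> and \<open>q\<close> evaluated on elementary tensors; surjectivity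
  of \<open>p\<close> becomes surjectivity of \<open>tensor3_lift P\<close>.\<close>

locale morita_ternary =
  fixes P :: "'x::complete_lattice \<Rightarrow> 'y::complete_lattice \<Rightarrow> 'x \<Rightarrow> 'x"
    and Q :: "'y \<Rightarrow> 'x \<Rightarrow> 'y \<Rightarrow> 'y"
  assumes trilinear_P: "trilinear P" and trilinear_Q: "trilinear Q"
    and surj_P: "surj (tensor3_lift P)" and surj_Q: "surj (tensor3_lift Q)"
    and P_assoc_left: "P (P x1 y1 x2) y2 x3 = P x1 (Q y1 x2 y2) x3"
    and P_assoc_right: "P x1 (Q y1 x2 y2) x3 = P x1 y1 (P x2 y2 x3)"
    and Q_assoc_left: "Q (Q y1 x1 y2) x2 y3 = Q y1 (P x1 y2 x2) y3"
    and Q_assoc_right: "Q y1 (P x1 y2 x2) y3 = Q y1 x1 (Q y2 x2 y3)"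
    and P_separated_right: "(\<And>u v. P u v x1 = P u v x2) \<Longrightarrow> x1 = x2"
    and P_separated_left: "(\<And>u v. P x1 v u = P x2 v u) \<Longrightarrow> x1 = x2"
    and Q_separated_right: "(\<And>v u. Q v u y1 = Q v u y2) \<Longrightarrow> y1 = y2"
    and Q_separated_left: "(\<And>u v. Q y1 u v = Q y2 u v) \<Longrightarrow> y1 = y2"

sublocale morita_ternary \<subseteq> ternary_action P
proof
  show "P (P x1 y1 x2) y2 x3 = P x1 y1 (P x2 y2 x3)" for x1 y1 x2 y2 x3
    by (simp only: P_assoc_left P_assoc_right)
qed (fact trilinear_P surj_P P_separated_right)+

sublocale morita_ternary \<subseteq> swap: morita_ternary Q P
  by unfold_locales
    (fact trilinear_P trilinear_Q surj_P surj_Q P_assoc_left P_assoc_right Q_assoc_left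
      Q_assoc_right | rule P_separated_right P_separated_left Q_separated_right Q_separated_left;
      simp)+

context morita_ternary
begin

lemma Q_pair_ract: "Q (pair_ract Q y S) u v = Q y (pair_act P S u) v"
  by (simp add: pair_ract_def pair_act_def trilinear_Sup1[OF trilinear_Q]
      trilinear_Sup2[OF trilinear_Q] image_image Q_assoc_left case_prod_unfold)

lemma pair_ract_cong: "pair_act P S = pair_act P T \<Longrightarrow> pair_ract Q y S = pair_ract Q y T"
  by (rule Q_separated_left) (simp add: Q_pair_ract)

lemma pair_ract_pair_closure [simp]: "pair_ract Q y (pair_closure P S) = pair_ract Q y S"
  by (rule pair_ract_cong) simp

lemma pair_ract_pairing [simp]: "pair_ract Q y (pairing P x y') = Q y x y'"
  unfolding pairing_def pair_ract_pair_closure by (simp add: pair_ract_def)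

lemma pair_ract_Union: "pair_ract Q y (\<Union>Ss) = (SUP S\<in>Ss. pair_ract Q y S)"
  unfolding pair_ract_def using SUP_UNION[of _ "\<lambda>S. S" Ss] by simp

lemma pair_ract_Sup: "pair_ract Q (Sup Ys) S = (SUP y\<in>Ys. pair_ract Q y S)"
  unfolding pair_ract_def trilinear_Sup1[OF trilinear_Q] case_prod_unfold by (rule SUP_commute)

lemma pair_ract_pair_mult: "pair_ract Q y (pair_mult P S T) = pair_ract Q (pair_ract Q y S) T"
proof -
  have "pair_ract Q y (pair_mult P S T) = (SUP (x, y')\<in>S. SUP (x', y'')\<in>T. Q (Q y x y') x' y'')"
    by (simp add: pair_ract_def pair_mult_def image_image SUP_Times case_prod_unfold Q_assoc_left)
  also have "\<dots> = pair_ract Q (pair_ract Q y S) T"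
    unfolding pair_ract_def[of Q _ T] pair_ract_def[of Q y S] trilinear_Sup1[OF trilinear_Q]
    by (simp add: image_image case_prod_unfold SUP_commute[of _ S])
  finally show ?thesis .
qed

lemma right_mregular_pair_ract: "right_mregular (pair_quantale P) tlat (pair_ract Q)"
  unfolding right_mregular_def right_module_def
proof (intro conjI ballI allI impI)
  fix m :: 'y
  obtain T where T: "m = (SUP (a, b, c)\<in>T. Q a b c)" by (rule swap.obtain_SUP_P)
  let ?S = "(\<lambda>(a, b, c). pair_ract Q a (pairing P b c)) ` T"
  have "pair_ract Q a (pairing P b c)
      \<in> {pair_ract Q n a |n a. n \<in> carrier tlat \<and> a \<in> carrier (pair_quantale P)}" for a b c
    by (intro CollectI exI conjI) (rule refl | simp)+
  then have "?S \<subseteq> {pair_ract Q n a |n a. n \<in> carrier tlat \<and> a \<in> carrier (pair_quantale P)}"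
    by (auto simp del: pair_ract_pairing)
  moreover have "m = lub tlat ?S"
    by (simp add: T image_image case_prod_unfold)
  ultimately show "\<exists>S. S \<subseteq> {pair_ract Q n a |n a. n \<in> carrier tlat \<and> a \<in> carrier (pair_quantale P)} \<and>
      m = lub tlat S"
    by (intro exI[of _ ?S] conjI)
next
  fix m n :: 'y
  assume eq: "\<forall>a\<in>carrier (pair_quantale P). pair_ract Q m a = pair_ract Q n a"
  have "Q m u v = Q n u v" for u v
    using eq[rule_format, OF pairing_in_carrier[of P u v]] by simp
  then show "m = n" by (rule Q_separated_left)
qed (simp_all add: quantale_pair_quantale sup_lattice_tlat mult_pair_quantale pair_ract_pair_mult
    pair_ract_Sup lub_pair_quantale pair_ract_Union)

lemma P_pair_ract: "P x (pair_ract Q y a) z = P x y (pair_act P a z)"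
  by (simp add: pair_ract_def pair_act_def P_Sup2 P_Sup3 image_image case_prod_unfold P_assoc_right)

lemma pairing_pair_ract: "pairing P x (pair_ract Q y a) = mult (pair_quantale P) (pairing P x y) a"
  by (rule pair_quantale_eqI[where P = P]) (simp_all add: mult_in_carrier pair_act_mult P_pair_ract)

lemma P_pair_ract_balanced: "P (pair_ract P x b) y z = P x (pair_act Q b y) z"
  by (simp add: pair_ract_def pair_act_def P_Sup1 P_Sup2 image_image case_prod_unfold P_assoc_left)

lemma pairing_pair_ract_balanced: "pairing P (pair_ract P x b) y = pairing P x (pair_act Q b y)"
  unfolding pairing_def pair_closure_eq_iff by (simp add: fun_eq_iff P_pair_ract_balanced)

end

lemma (in morita_ternary) morita_context_pair_quantale:
  "morita_context (pair_quantale P) (pair_quantale Q) (pair_act P) (pair_ract P) (pair_act Q)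
     (pair_ract Q) (pairing P) (pairing Q)"
  unfolding morita_context_def mregular_bimodule_def
  by (simp add: mregular_quantale_pair_quantale swap.mregular_quantale_pair_quantale
      left_mregular_pair_act swap.left_mregular_pair_act right_mregular_pair_ract
      swap.right_mregular_pair_ract pair_ract_pair_act_comm swap.pair_ract_pair_act_comm
      pairing_Sup1 pairing_Sup2 swap.pairing_Sup1 swap.pairing_Sup2 pairing_pair_act
      swap.pairing_pair_act pairing_pair_ract swap.pairing_pair_ract pairing_pair_ract_balanced
      swap.pairing_pair_ract_balanced)
    (intro conjI exI[of _ "pair_closure P"] exI[of _ "pair_closure Q"];
      simp add: sup_preserving_pair_closure swap.sup_preserving_pair_closure pair_closure_etensor2
        swap.pair_closure_etensor2 pair_closure_image_tensor2 swap.pair_closure_image_tensor2)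

lemma morita_ternary_of_morita_context:
  assumes "morita_context A B lX rX lY rY pr br"
  shows "morita_ternary (\<lambda>x y x'. lX (pr x y) x') (\<lambda>y x y'. lY (br y x) y')"
proof -
  note sym = morita_context_sym[OF assms]
  show ?thesis
    by unfold_locales
      (fact trilinear_left_act_pr[OF assms] trilinear_left_act_pr[OF sym]
        surj_tensor3_lift_left_act_pr[OF assms] surj_tensor3_lift_left_act_pr[OF sym]
        left_act_pr_assoc_left[OF assms] left_act_pr_assoc_right[OF assms]
        left_act_pr_assoc_left[OF sym] left_act_pr_assoc_right[OF sym]
        left_act_pr_separated_right[OF assms] left_act_pr_separated_left[OF assms]
        left_act_pr_separated_right[OF sym] |
       rule left_act_pr_separated_left[OF sym]; simp)+
qed

lemma morita_context_exists_iff_morita_ternary: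
  "(\<exists>(A :: ('x::complete_lattice \<times> 'y::complete_lattice) set quantale) (B :: ('y \<times> 'x) set quantale)
      (lX :: ('x \<times> 'y) set \<Rightarrow> 'x \<Rightarrow> 'x) (rX :: 'x \<Rightarrow> ('y \<times> 'x) set \<Rightarrow> 'x)
      (lY :: ('y \<times> 'x) set \<Rightarrow> 'y \<Rightarrow> 'y) (rY :: 'y \<Rightarrow> ('x \<times> 'y) set \<Rightarrow> 'y)
      pr br. morita_context A B lX rX lY rY pr br)
   \<longleftrightarrow> (\<exists>(P :: 'x \<Rightarrow> 'y \<Rightarrow> 'x \<Rightarrow> 'x) Q. morita_ternary P Q)"
  by (blast intro: morita_ternary_of_morita_context morita_ternary.morita_context_pair_quantale)

lemma morita_ternary_iff_tensor3_maps:
  "(\<exists>(P :: 'x::complete_lattice \<Rightarrow> 'y::complete_lattice \<Rightarrow> 'x \<Rightarrow> 'x) Q. morita_ternary P Q)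
   \<longleftrightarrow>
    (\<exists>(p :: ('x \<times> 'y \<times> 'x) set \<Rightarrow> 'x) (q :: ('y \<times> 'x \<times> 'y) set \<Rightarrow> 'y).
       sup_preserving (tensor3 :: ('x \<times> 'y \<times> 'x) set slat) (tlat :: 'x slat) p \<and>
       p ` carrier (tensor3 :: ('x \<times> 'y \<times> 'x) set slat) = UNIV \<and>
       sup_preserving (tensor3 :: ('y \<times> 'x \<times> 'y) set slat) (tlat :: 'y slat) q \<and>
       q ` carrier (tensor3 :: ('y \<times> 'x \<times> 'y) set slat) = UNIV \<and>
       (\<forall>x1 x2 x3 y1 y2.
          p (etensor3 (p (etensor3 x1 y1 x2)) y2 x3) = p (etensor3 x1 (q (etensor3 y1 x2 y2)) x3) \<and>
          p (etensor3 x1 (q (etensor3 y1 x2 y2)) x3) = p (etensor3 x1 y1 (p (etensor3 x2 y2 x3)))) \<and>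
       (\<forall>y1 y2 y3 x1 x2.
          q (etensor3 (q (etensor3 y1 x1 y2)) x2 y3) = q (etensor3 y1 (p (etensor3 x1 y2 x2)) y3) \<and>
          q (etensor3 y1 (p (etensor3 x1 y2 x2)) y3) = q (etensor3 y1 x1 (q (etensor3 y2 x2 y3)))) \<and>
       (\<forall>x1 x2. (\<forall>u v. p (etensor3 u v x1) = p (etensor3 u v x2)) \<longrightarrow> x1 = x2) \<and>
       (\<forall>x1 x2. (\<forall>u v. p (etensor3 x1 v u) = p (etensor3 x2 v u)) \<longrightarrow> x1 = x2) \<and>
       (\<forall>y1 y2. (\<forall>v u. q (etensor3 v u y1) = q (etensor3 v u y2)) \<longrightarrow> y1 = y2) \<and>
       (\<forall>y1 y2. (\<forall>u v. q (etensor3 y1 u v) = q (etensor3 y2 u v)) \<longrightarrow> y1 = y2))"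
  (is "?ternary \<longleftrightarrow> (\<exists>p q. ?maps p q)")
proof
  assume ?ternary
  then obtain P :: "'x \<Rightarrow> 'y \<Rightarrow> 'x \<Rightarrow> 'x" and Q where "morita_ternary P Q" by blast
  then interpret morita_ternary P Q .
  have lifts: "?maps (tensor3_lift P) (tensor3_lift Q)"
    by (simp add: sup_preserving_tensor3_lift tensor3_lift_image tensor3_lift_etensor3 trilinear_P
        trilinear_Q surj_P surj_Q P_assoc_left P_assoc_right Q_assoc_left Q_assoc_right)
      (blast intro: P_separated_right P_separated_left Q_separated_right Q_separated_left)
  show "\<exists>p q. ?maps p q"
    by (intro exI[of _ "tensor3_lift P"] exI[of _ "tensor3_lift Q"]) (fact lifts)
next
  assume "\<exists>p q. ?maps p q"
  then obtain p q where maps: "?maps p q" by (elim exE) (rule that)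
  have "morita_ternary (\<lambda>a b c. p (etensor3 a b c)) (\<lambda>a b c. q (etensor3 a b c))"
  proof
    show "trilinear (\<lambda>a b c. p (etensor3 a b c))" "trilinear (\<lambda>a b c. q (etensor3 a b c))"
      using maps by (simp_all add: trilinear_sup_preserving_tensor3)
    show "surj (tensor3_lift (\<lambda>a b c. p (etensor3 a b c)))"
      "surj (tensor3_lift (\<lambda>a b c. q (etensor3 a b c)))"
      using maps by (simp_all flip: sup_preserving_tensor3_image)
  qed (use maps in blast)+
  then show ?ternary by blast
qed

theorem theorem1:
  shows "(\<exists>(A :: ('x::complete_lattice \<times> 'y::complete_lattice) set quantale) (B :: ('y \<times> 'x) set quantale)
            (lX :: ('x \<times> 'y) set \<Rightarrow> 'x \<Rightarrow> 'x) (rX :: 'x \<Rightarrow> ('y \<times> 'x) set \<Rightarrow> 'x)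
            (lY :: ('y \<times> 'x) set \<Rightarrow> 'y \<Rightarrow> 'y) (rY :: 'y \<Rightarrow> ('x \<times> 'y) set \<Rightarrow> 'y)
            pr br. morita_context A B lX rX lY rY pr br)
    \<longleftrightarrow>
    (\<exists>(p :: ('x \<times> 'y \<times> 'x) set \<Rightarrow> 'x) (q :: ('y \<times> 'x \<times> 'y) set \<Rightarrow> 'y).
       sup_preserving (tensor3 :: ('x \<times> 'y \<times> 'x) set slat) (tlat :: 'x slat) p \<and>
       p ` carrier (tensor3 :: ('x \<times> 'y \<times> 'x) set slat) = UNIV \<and>
       sup_preserving (tensor3 :: ('y \<times> 'x \<times> 'y) set slat) (tlat :: 'y slat) q \<and>
       q ` carrier (tensor3 :: ('y \<times> 'x \<times> 'y) set slat) = UNIV \<and>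
       (\<forall>x1 x2 x3 y1 y2.
          p (etensor3 (p (etensor3 x1 y1 x2)) y2 x3) = p (etensor3 x1 (q (etensor3 y1 x2 y2)) x3) \<and>
          p (etensor3 x1 (q (etensor3 y1 x2 y2)) x3) = p (etensor3 x1 y1 (p (etensor3 x2 y2 x3)))) \<and>
       (\<forall>y1 y2 y3 x1 x2.
          q (etensor3 (q (etensor3 y1 x1 y2)) x2 y3) = q (etensor3 y1 (p (etensor3 x1 y2 x2)) y3) \<and>
          q (etensor3 y1 (p (etensor3 x1 y2 x2)) y3) = q (etensor3 y1 x1 (q (etensor3 y2 x2 y3)))) \<and>
       (\<forall>x1 x2. (\<forall>u v. p (etensor3 u v x1) = p (etensor3 u v x2)) \<longrightarrow> x1 = x2) \<and>
       (\<forall>x1 x2. (\<forall>u v. p (etensor3 x1 v u) = p (etensor3 x2 v u)) \<longrightarrow> x1 = x2) \<and>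
       (\<forall>y1 y2. (\<forall>v u. q (etensor3 v u y1) = q (etensor3 v u y2)) \<longrightarrow> y1 = y2) \<and>
       (\<forall>y1 y2. (\<forall>u v. q (etensor3 y1 u v) = q (etensor3 y2 u v)) \<longrightarrow> y1 = y2))"
  by (simp only: morita_context_exists_iff_morita_ternary morita_ternary_iff_tensor3_maps)

end
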